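(* Let $A$ be a synaptic algebra and let $p,q\in P$ be in generic position ($p\wedge q=p\wedge q^{\perp}=p^{\perp}\wedge q=p^{\perp}\wedge q^{\perp}=0$). Let $c:=(pqp+p^{\perp}q^{\perp}p^{\perp})^{1/2}$, $s:=(pq^{\perp}p+p^{\perp}qp^{\perp})^{1/2}$, let $u$, $v$ and $k$ be the symmetries of the polar decompositions of $p-q^{\perp}$, $p-q$ and $pqp^{\perp}+p^{\perp}qp$ respectively, and put $j:=uvp+pvu$. Then: (i) $c^{\circ}=s^{\circ}=(cs)^{\circ}=(csj)^{\circ}=1$; (ii) $uv+vu=0$; (iii) $j=k$.
   Context: Synaptic algebra (Foulis): $R$ is a real linear associative algebra with unit $1$, and $A\subseteq R$ is a real linear subspace with $1\in A$. For $a,b\in A$ write $aCb$ iff $ab=ba$; $C(a):=\{b\in A: aCb\}$; $CC(a):=\{b\in A: bCd \text{ for all } d\in C(a)\}$. $A$ is a synaptic algebra with enveloping algebra $R$ iff: (SA1) $A$ is a partially ordered archimedean real linear space with positive cone $A^+$, $1$ is an order unit, $\|\cdot\|$ the order-unit norm; (SA2) $a\in A\Rightarrow a^2\in A^+$; (SA3) $a,b\in A^+\Rightarrow aba\in A^+$; (SA4) if $a\in A$, $b\in A^+$, $aba=0$ then $ab=ba=0$; (SA5) if $a\in A^+$ there is $b\in A^+\cap CC(a)$ with $b^2=a$; (SA6) for $a\in A$ there is $p=p^2\in A$ with $ab=0\Leftrightarrow pb=0$ for all $b\in A$; (SA7) if $1\le a$ there is $b\in A$ with $ab=ba=1$; (SA8)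 if $a,b\in A$, $a_1\le a_2\le\cdots$ are pairwise commuting elements of $C(b)$ with $\|a-a_n\|\to0$, then $a\in C(b)$. $A$ is nondegenerate. Products are computed in $R$ ($c$, $s$, $j$ pairwise commute, so $cs,csj\in A$). $P:=\{p\in A:p=p^2\}$ with inherited order is an orthomodular lattice with $p^{\perp}:=1-p$, meet $\wedge$, join $\vee$. For $0\le a$, $a^{1/2}$ is its unique positive square root in $A$, $|a|:=(a^2)^{1/2}$; $a^{\circ}$ is the carrier of $a$ (the unique projection with $ab=0\Leftrightarrow a^{\circ}b=0$ for all $b\in A$). A symmetry is $u\in A$ with $u^2=1$. For $a\in A$, the signum $t$ of $a$ is the partial symmetry with $t^2=a^{\circ}$, $t\in CC(a)$, $a=|a|t=t|a|$; the symmetry of the polar decomposition of $a$ is $t+(a^{\circ})^{\perp}$. *)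

theory Defs
  imports Complex_Main
begin

text \<open>The enveloping algebra R is the type 'a
  (a real associative algebra with unit, class real_algebra_1, in which 0 \<noteq> 1,
  i.e. nondegenerate); A is a subset of it; the order of A is given by its
  positive cone Apos.\<close>

definition sa_le :: "'a::real_algebra_1 set \<Rightarrow> 'a \<Rightarrow> 'a \<Rightarrow> bool" where
  "sa_le Apos a b \<longleftrightarrow> b - a \<in> Apos"

definition commutes :: "'a::real_algebra_1 \<Rightarrow> 'a \<Rightarrow> bool" where
  "commutes a b \<longleftrightarrow> a * b = b * a"

definition sa_C :: "'a::real_algebra_1 set \<Rightarrow> 'a \<Rightarrow> 'a set" where
  "sa_C A a = {b \<in> A. commutes a b}"

definition sa_CC :: "'a::real_algebra_1 set \<Rightarrow> 'a \<Rightarrow> 'a set" where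
  "sa_CC A a = {b \<in> A. \<forall>d\<in>sa_C A a. commutes b d}"

definition ou_norm :: "'a::real_algebra_1 set \<Rightarrow> 'a \<Rightarrow> real" where
  "ou_norm Apos a = Inf {r. 0 \<le> r \<and> sa_le Apos (- (r *\<^sub>R 1)) a \<and> sa_le Apos a (r *\<^sub>R 1)}"

definition synaptic_algebra :: "'a::real_algebra_1 set \<Rightarrow> 'a set \<Rightarrow> bool" where
  "synaptic_algebra A Apos \<longleftrightarrow>
     \<comment> \<open>A is a real linear subspace of R containing 1\<close>
     0 \<in> A \<and> 1 \<in> A \<and> (\<forall>a\<in>A. \<forall>b\<in>A. a + b \<in> A) \<and> (\<forall>r. \<forall>a\<in>A. r *\<^sub>R a \<in> A) \<and>
     \<comment> \<open>SA1: partially ordered (positive cone), archimedean, 1 an order unit\<close>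
     Apos \<subseteq> A \<and> (\<forall>a\<in>Apos. \<forall>b\<in>Apos. a + b \<in> Apos) \<and>
     (\<forall>r\<ge>0. \<forall>a\<in>Apos. r *\<^sub>R a \<in> Apos) \<and>
     (\<forall>a\<in>Apos. - a \<in> Apos \<longrightarrow> a = 0) \<and>
     (\<forall>a\<in>A. \<forall>b\<in>A. (\<forall>n::nat. sa_le Apos (real n *\<^sub>R a) b) \<longrightarrow> sa_le Apos a 0) \<and>
     (\<forall>a\<in>A. \<exists>r>0. sa_le Apos (- (r *\<^sub>R 1)) a \<and> sa_le Apos a (r *\<^sub>R 1)) \<and>
     \<comment> \<open>SA2\<close>
     (\<forall>a\<in>A. a * a \<in> Apos) \<and>
     \<comment> \<open>SA3\<close>
     (\<forall>a\<in>Apos. \<forall>b\<in>Apos. a * b * a \<in> Apos) \<and>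
     \<comment> \<open>SA4\<close>
     (\<forall>a\<in>A. \<forall>b\<in>Apos. a * b * a = 0 \<longrightarrow> a * b = 0 \<and> b * a = 0) \<and>
     \<comment> \<open>SA5\<close>
     (\<forall>a\<in>Apos. \<exists>b\<in>Apos. b \<in> sa_CC A a \<and> b * b = a) \<and>
     \<comment> \<open>SA6\<close>
     (\<forall>a\<in>A. \<exists>p\<in>A. p * p = p \<and> (\<forall>b\<in>A. a * b = 0 \<longleftrightarrow> p * b = 0)) \<and>
     \<comment> \<open>SA7\<close>
     (\<forall>a\<in>A. sa_le Apos 1 a \<longrightarrow> (\<exists>b\<in>A. a * b = 1 \<and> b * a = 1)) \<and>
     \<comment> \<open>SA8\<close>
     (\<forall>a\<in>A. \<forall>b\<in>A. \<forall>s::nat \<Rightarrow> 'a.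
        (\<forall>n. s n \<in> sa_C A b) \<and> (\<forall>n. sa_le Apos (s n) (s (Suc n))) \<and>
        (\<forall>m n. commutes (s m) (s n)) \<and>
        ((\<lambda>n. ou_norm Apos (a - s n)) \<longlonglongrightarrow> 0)
        \<longrightarrow> a \<in> sa_C A b)"

definition sa_P :: "'a::real_algebra_1 set \<Rightarrow> 'a set" where
  "sa_P A = {p \<in> A. p * p = p}"

definition perp :: "'a::real_algebra_1 \<Rightarrow> 'a" where
  "perp p = 1 - p"

definition is_proj_meet :: "'a::real_algebra_1 set \<Rightarrow> 'a set \<Rightarrow> 'a \<Rightarrow> 'a \<Rightarrow> 'a \<Rightarrow> bool" where
  "is_proj_meet A Apos p q m \<longleftrightarrow> m \<in> sa_P A \<and> sa_le Apos m p \<and> sa_le Apos m q \<and>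
     (\<forall>r\<in>sa_P A. sa_le Apos r p \<and> sa_le Apos r q \<longrightarrow> sa_le Apos r m)"

definition proj_meet :: "'a::real_algebra_1 set \<Rightarrow> 'a set \<Rightarrow> 'a \<Rightarrow> 'a \<Rightarrow> 'a" where
  "proj_meet A Apos p q = (THE m. is_proj_meet A Apos p q m)"

definition generic_position :: "'a::real_algebra_1 set \<Rightarrow> 'a set \<Rightarrow> 'a \<Rightarrow> 'a \<Rightarrow> bool" where
  "generic_position A Apos p q \<longleftrightarrow>
     proj_meet A Apos p q = 0 \<and> proj_meet A Apos p (perp q) = 0 \<and>
     proj_meet A Apos (perp p) q = 0 \<and> proj_meet A Apos (perp p) (perp q) = 0"

definition sa_sqrt :: "'a::real_algebra_1 set \<Rightarrow> 'a \<Rightarrow> 'a" where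
  "sa_sqrt Apos a = (THE b. b \<in> Apos \<and> b * b = a)"

definition sa_abs :: "'a::real_algebra_1 set \<Rightarrow> 'a \<Rightarrow> 'a" where
  "sa_abs Apos a = sa_sqrt Apos (a * a)"

definition carrier_of :: "'a::real_algebra_1 set \<Rightarrow> 'a \<Rightarrow> 'a" where
  "carrier_of A a = (THE p. p \<in> sa_P A \<and> (\<forall>b\<in>A. a * b = 0 \<longleftrightarrow> p * b = 0))"

definition signum :: "'a::real_algebra_1 set \<Rightarrow> 'a set \<Rightarrow> 'a \<Rightarrow> 'a" where
  "signum A Apos a = (THE t. t \<in> A \<and> t * t = carrier_of A a \<and> t \<in> sa_CC A a \<and>
       a = sa_abs Apos a * t \<and> a = t * sa_abs Apos a)"

definition polar_symmetry :: "'a::real_algebra_1 set \<Rightarrow> 'a set \<Rightarrow> 'a \<Rightarrow> 'a" where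
  "polar_symmetry A Apos a = signum A Apos a + perp (carrier_of A a)"

end

theory Submission
  imports Defs
begin

text \<open>Write p' = perp p and q' = perp q, and put X = p - q' and Y = p - q. Then
  X X = pqp + p'q'p' and Y Y = pq'p + p'qp', so c = |X|, s = |Y|, and u, v are the polar
  symmetries of X, Y; moreover XY + YX = 0, XX + YY = 1, XY(X + Y) = pqp' + p'qp and
  2p = 1 + X + Y. Generic position makes XX and YY faithful, i.e. of carrier 1, hence so are
  c, s and cs. Since c and s commute with each other and with u and v, cancelling c and then s
  turns XY = -YX into uv = -vu. Now XY(X + Y) = cs(su - cv) with su - cv a symmetry commuting
  with the faithful positive element cs, which identifies k with su - cv; expanding uvp + pvu
  with 2p = 1 + X + Y gives j = su - cv as well.\<close>

lemma mult_eq_assoc: "(a::'a::semigroup_mult) * b = c \<Longrightarrow> a * (b * x) = c * x"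
  by (simp add: mult.assoc[symmetric])

lemma double_cancel: "(x::'a::real_vector) + x = y + y \<Longrightarrow> x = y"
  by (metis scaleR_2 scaleR_cancel_left zero_neq_numeral)

lemma half_double: "(1/2) *\<^sub>R (x + x) = (x::'a::real_vector)"
  by (simp add: scaleR_2[symmetric])

lemma perp_perp [simp]: "perp (perp p) = p"
  by (simp add: perp_def)

lemma perp_idem: "p * p = p \<Longrightarrow> perp p * perp p = perp p"
  by (simp add: perp_def algebra_simps)

lemma mult_perp_eq_0: "p * p = p \<Longrightarrow> p * perp p = 0" "p * p = p \<Longrightarrow> perp p * p = 0"
  by (simp_all add: perp_def algebra_simps)

lemma projection_pair_identities:
  fixes p q :: "'a::real_algebra_1"
  assumes p: "p * p = p" and q: "q * q = q"
  shows square_diff_perp: "(p - perp q) * (p - perp q) = p * q * p + perp p * perp q * perp p"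
    and square_diff: "(p - q) * (p - q) = p * perp q * p + perp p * q * perp p"
    and diffs_anticommute: "(p - perp q) * (p - q) + (p - q) * (p - perp q) = 0"
    and sum_squares_diffs: "(p - perp q) * (p - perp q) + (p - q) * (p - q) = 1"
    and diffs_mult_sum: "(p - perp q) * (p - q) * ((p - perp q) + (p - q))
        = p * q * perp p + perp p * q * p"
    and double_eq_sum_diffs: "p + p = 1 + (p - perp q) + (p - q)"
  using p q mult_eq_assoc[OF p] mult_eq_assoc[OF q] by (simp_all add: perp_def algebra_simps)

locale synaptic =
  fixes A Apos :: "'a::real_algebra_1 set"
  assumes synaptic: "synaptic_algebra A Apos"
begin

lemma one_in_A: "1 \<in> A"
  using synaptic unfolding synaptic_algebra_def by simp
lemma add_in_A: "a \<in> A \<Longrightarrow> b \<in> A \<Longrightarrow> a + b \<in> A"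
  using synaptic unfolding synaptic_algebra_def by simp
lemma scaleR_in_A: "a \<in> A \<Longrightarrow> r *\<^sub>R a \<in> A"
  using synaptic unfolding synaptic_algebra_def by simp
lemma pos_in_A: "a \<in> Apos \<Longrightarrow> a \<in> A"
  using synaptic unfolding synaptic_algebra_def by (simp add: subset_iff)
lemma pos_antisym: "a \<in> Apos \<Longrightarrow> - a \<in> Apos \<Longrightarrow> a = 0"
  using synaptic unfolding synaptic_algebra_def by simp
lemma square_pos: "a \<in> A \<Longrightarrow> a * a \<in> Apos"
  using synaptic unfolding synaptic_algebra_def by simp
lemma sandwich_pos: "a \<in> Apos \<Longrightarrow> b \<in> Apos \<Longrightarrow> a * b * a \<in> Apos"
  using synaptic unfolding synaptic_algebra_def by simp
lemma sandwich_eq_0: "a \<in> A \<Longrightarrow> b \<in> Apos \<Longrightarrow> a * b * a = 0 \<Longrightarrow> a * b = 0 \<and> b * a = 0"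
  using synaptic unfolding synaptic_algebra_def by simp
lemma sqrt_exists: "a \<in> Apos \<Longrightarrow> \<exists>b\<in>Apos. b \<in> sa_CC A a \<and> b * b = a"
  using synaptic unfolding synaptic_algebra_def by simp
lemma carrier_exists: "a \<in> A \<Longrightarrow> \<exists>e\<in>A. e * e = e \<and> (\<forall>b\<in>A. a * b = 0 \<longleftrightarrow> e * b = 0)"
  using synaptic unfolding synaptic_algebra_def by simp

lemma uminus_in_A: "a \<in> A \<Longrightarrow> - a \<in> A"
  using scaleR_in_A[of a "-1"] by simp

lemma diff_in_A: "a \<in> A \<Longrightarrow> b \<in> A \<Longrightarrow> a - b \<in> A"
  using add_in_A[OF _ uminus_in_A, of a b] by simp

lemma perp_in_A: "p \<in> A \<Longrightarrow> perp p \<in> A"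
  unfolding perp_def by (intro diff_in_A one_in_A)

lemma square_in_A: "a \<in> A \<Longrightarrow> a * a \<in> A"
  using square_pos pos_in_A by blast

lemma jordan_in_A: "a \<in> A \<Longrightarrow> b \<in> A \<Longrightarrow> a * b + b * a \<in> A"
proof -
  assume "a \<in> A" "b \<in> A"
  moreover have "a * b + b * a = (a + b) * (a + b) - a * a - b * b"
    by (simp add: algebra_simps)
  ultimately show ?thesis
    by (simp add: add_in_A diff_in_A square_in_A)
qed

lemma sandwich_in_A: "a \<in> A \<Longrightarrow> b \<in> A \<Longrightarrow> a * b * a \<in> A"
proof -
  assume a: "a \<in> A" and b: "b \<in> A"
  have "a * b * a + a * b * a = a * (a * b + b * a) + (a * b + b * a) * a - (a * a * b + b * (a * a))"
    by (simp add: algebra_simps)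
  also have "\<dots> \<in> A"
    using a b by (intro diff_in_A jordan_in_A square_in_A)
  finally show ?thesis
    using scaleR_in_A[of _ "1/2"] half_double by metis
qed

lemma commuting_mult_in_A: "a \<in> A \<Longrightarrow> b \<in> A \<Longrightarrow> a * b = b * a \<Longrightarrow> a * b \<in> A"
  using scaleR_in_A[OF jordan_in_A, of a b "1/2"] half_double by metis

lemma one_pos: "1 \<in> Apos"
  using square_pos[OF one_in_A] by simp

lemma idempotent_pos: "e \<in> A \<Longrightarrow> e * e = e \<Longrightarrow> e \<in> Apos"
  using square_pos by metis

lemma pos_add_eq_0: "a \<in> Apos \<Longrightarrow> b \<in> Apos \<Longrightarrow> a + b = 0 \<Longrightarrow> a = 0"
  using pos_antisym by (metis add_eq_0_iff)

lemma square_eq_0: "a \<in> A \<Longrightarrow> a * a = 0 \<Longrightarrow> a = 0"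
  using sandwich_eq_0[OF _ one_pos, of a] by simp

lemma mult_eq_0_commute: "a \<in> A \<Longrightarrow> b \<in> A \<Longrightarrow> a * b = 0 \<Longrightarrow> b * a = 0"
proof -
  assume a: "a \<in> A" and b: "b \<in> A" and ab: "a * b = 0"
  have "(a * b + b * a) * (a * b + b * a) = 0"
    using ab by (simp add: algebra_simps mult_eq_assoc[OF ab])
  then have "a * b + b * a = 0"
    using square_eq_0 jordan_in_A a b by blast
  with ab show ?thesis by simp
qed

lemma pos_mult_square_eq_0: "a \<in> Apos \<Longrightarrow> b \<in> A \<Longrightarrow> a * (b * b) = 0 \<Longrightarrow> a * b = 0"
proof -
  assume a: "a \<in> Apos" and b: "b \<in> A" and h: "a * (b * b) = 0"
  have aA: "a \<in> A" using a pos_in_A by blast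
  have "b * b * a = 0" using mult_eq_0_commute[OF aA square_in_A[OF b] h] .
  then have "(b * a * b) * (b * a * b) = 0"
    by (metis mult.assoc mult_zero_left mult_zero_right)
  then have "b * a * b = 0" using square_eq_0 sandwich_in_A[OF b aA] by blast
  then have "b * a = 0" using sandwich_eq_0[OF b a] by blast
  then show ?thesis using mult_eq_0_commute[OF b aA] by blast
qed

section \<open>Carriers and faithful elements\<close>

lemma annihilator_projection_unique:
  assumes e: "e \<in> A" "e * e = e" and f: "f \<in> A" "f * f = f"
    and ann_e: "\<forall>b\<in>A. a * b = 0 \<longleftrightarrow> e * b = 0" and ann_f: "\<forall>b\<in>A. a * b = 0 \<longleftrightarrow> f * b = 0"
  shows "e = f"
proof -
  have "e * perp e = 0" "f * perp f = 0"
    using e f by (simp_all add: mult_perp_eq_0)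
  then have "f * perp e = 0" "e * perp f = 0"
    using ann_e ann_f perp_in_A e f by blast+
  then have "perp e * f = 0"
    using mult_eq_0_commute perp_in_A e f by blast
  with \<open>e * perp f = 0\<close> show ?thesis
    by (simp add: perp_def algebra_simps)
qed

lemma carrier_of:
  assumes "a \<in> A"
  shows carrier_of_in_A: "carrier_of A a \<in> A"
    and carrier_of_idem: "carrier_of A a * carrier_of A a = carrier_of A a"
    and carrier_of_ann: "\<forall>b\<in>A. a * b = 0 \<longleftrightarrow> carrier_of A a * b = 0"
proof -
  obtain e where e: "e \<in> A" "e * e = e" "\<forall>b\<in>A. a * b = 0 \<longleftrightarrow> e * b = 0"
    using carrier_exists[OF assms] by blast
  have "carrier_of A a = e"
    unfolding carrier_of_def
  proof (rule the_equality)
    show "e \<in> sa_P A \<and> (\<forall>b\<in>A. a * b = 0 \<longleftrightarrow> e * b = 0)"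
      using e unfolding sa_P_def by blast
  next
    fix e' assume "e' \<in> sa_P A \<and> (\<forall>b\<in>A. a * b = 0 \<longleftrightarrow> e' * b = 0)"
    then show "e' = e"
      unfolding sa_P_def using annihilator_projection_unique[OF _ _ e(1,2) _ e(3)] by blast
  qed
  with e show "carrier_of A a \<in> A" "carrier_of A a * carrier_of A a = carrier_of A a"
    "\<forall>b\<in>A. a * b = 0 \<longleftrightarrow> carrier_of A a * b = 0" by simp_all
qed

lemma carrier_of_eqI:
  "a \<in> A \<Longrightarrow> e \<in> A \<Longrightarrow> e * e = e \<Longrightarrow> \<forall>b\<in>A. a * b = 0 \<longleftrightarrow> e * b = 0 \<Longrightarrow>
    carrier_of A a = e"
  using annihilator_projection_unique carrier_of by blast

lemma mult_carrier_of:
  assumes a: "a \<in> A"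
  shows "a * carrier_of A a = a" and "carrier_of A a * a = a"
proof -
  let ?e = "carrier_of A a"
  have "?e * perp ?e = 0"
    using carrier_of_idem[OF a] by (simp add: mult_perp_eq_0)
  then have "a * perp ?e = 0"
    using carrier_of_ann[OF a] perp_in_A[OF carrier_of_in_A[OF a]] by blast
  moreover from this have "perp ?e * a = 0"
    using mult_eq_0_commute a perp_in_A[OF carrier_of_in_A[OF a]] by blast
  ultimately show "a * ?e = a" "?e * a = a"
    by (simp_all add: perp_def algebra_simps)
qed

lemma carrier_of_commute:
  assumes a: "a \<in> A" and d: "d \<in> A" and da: "d * a = a * d"
  shows "d * carrier_of A a = carrier_of A a * d"
proof -
  let ?e = "carrier_of A a"
  have e: "?e \<in> A" "?e * ?e = ?e" using carrier_of[OF a] by blast+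
  have ee: "?e * (?e * x) = ?e * x" for x using mult_eq_assoc[OF e(2)] .
  have "a * (d * perp ?e + perp ?e * d) = d * (a - a * ?e) + (a - a * ?e) * d"
    by (simp add: perp_def algebra_simps da mult_eq_assoc[OF da])
  also have "\<dots> = 0" using mult_carrier_of[OF a] by simp
  finally have "?e * (d * perp ?e + perp ?e * d) = 0"
    using carrier_of_ann[OF a] jordan_in_A[OF d perp_in_A[OF e(1)]] by blast
  then have ede: "?e * d * ?e = ?e * d"
    by (simp add: perp_def algebra_simps ee e(2))
  let ?b = "d * ?e - ?e * d * ?e"
  have "?b = ?e * d + d * ?e - (?e * d * ?e + ?e * d * ?e)"
    using ede by simp
  also have "\<dots> \<in> A"
    using e d by (intro diff_in_A jordan_in_A add_in_A sandwich_in_A)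
  finally have "?b \<in> A" .
  moreover have "?b * ?b = 0"
  proof -
    have "?e * (d * (?e * x)) = ?e * (d * x)" for x
      using ede by (metis mult.assoc)
    moreover have "?b * ?b = d * (?e * d * ?e) - d * ?e * (?e * d * ?e) - ?e * d * (?e * d * ?e)
        + ?e * d * ?e * (?e * d * ?e)"
      by (simp add: algebra_simps)
    ultimately show ?thesis
      using ede by (simp add: mult.assoc ee)
  qed
  ultimately have "?b = 0" using square_eq_0 by blast
  with ede show ?thesis by simp
qed

definition faithful :: "'a \<Rightarrow> bool" where
  "faithful a \<longleftrightarrow> (\<forall>b\<in>A. a * b = 0 \<longrightarrow> b = 0)"

lemma faithfulD: "faithful a \<Longrightarrow> b \<in> A \<Longrightarrow> a * b = 0 \<Longrightarrow> b = 0"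
  unfolding faithful_def by blast

lemma carrier_of_eq_1_iff: "a \<in> A \<Longrightarrow> carrier_of A a = 1 \<longleftrightarrow> faithful a"
  unfolding faithful_def using carrier_of_ann carrier_of_eqI[OF _ one_in_A] by fastforce

lemma faithful_of_square: "faithful (a * a) \<Longrightarrow> faithful a"
  unfolding faithful_def by (metis mult.assoc mult_zero_right)

lemma faithful_square:
  assumes a: "a \<in> A" and fa: "faithful a"
  shows "faithful (a * a)"
  unfolding faithful_def
proof (intro ballI impI)
  fix b assume b: "b \<in> A" and "a * a * b = 0"
  then have baa: "b * b * (a * a) = 0"
    using mult_eq_0_commute[OF square_in_A[OF a] b] by (simp add: mult.assoc)
  have "(a * (b * b) * a) * (a * (b * b) * a) = 0"
    using mult_eq_assoc[OF baa] by (simp add: mult.assoc)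
  then have "a * (b * b) * a = 0"
    using square_eq_0 sandwich_in_A[OF a square_in_A[OF b]] by blast
  then have "a * (b * b) = 0" using sandwich_eq_0[OF a square_pos[OF b]] by blast
  then have "b * b = 0" using faithfulD[OF fa square_in_A[OF b]] by blast
  then show "b = 0" using square_eq_0[OF b] by blast
qed

lemma faithful_mult_pos:
  assumes x: "x \<in> A" "faithful x" and y: "y \<in> Apos" "faithful y"
  shows "faithful (x * y)"
  unfolding faithful_def
proof (intro ballI impI)
  fix b assume b: "b \<in> A" and h: "x * y * b = 0"
  have yA: "y \<in> A" using y pos_in_A by blast
  have "x * (y * (b * b) * y) = x * y * b * b * y" by (simp add: mult.assoc)
  then have "y * (b * b) * y = 0"
    using h faithfulD[OF x(2) sandwich_in_A[OF yA square_in_A[OF b]]] by simp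
  then have "y * (b * b) = 0" using sandwich_eq_0[OF yA square_pos[OF b]] by blast
  then have "y * b = 0" using pos_mult_square_eq_0[OF y(1) b] by blast
  then show "b = 0" using faithfulD[OF y(2) b] by blast
qed

section \<open>Square roots and polar symmetries\<close>

lemma CC_commute: "x \<in> sa_CC A a \<Longrightarrow> d \<in> A \<Longrightarrow> a * d = d * a \<Longrightarrow> x * d = d * x"
  unfolding sa_CC_def sa_C_def commutes_def by blast

lemma pos_sqrt_unique:
  assumes a: "a \<in> Apos" and b: "b \<in> Apos" "b \<in> sa_CC A a" "b * b = a"
    and b': "b' \<in> Apos" "b' * b' = a"
  shows "b' = b"
proof -
  have bA: "b \<in> A" and b'A: "b' \<in> A" using b(1) b'(1) pos_in_A by auto
  have sA: "b + b' \<in> A" using add_in_A[OF bA b'A] .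
  let ?e = "carrier_of A (b + b')"
  let ?f = "perp ?e"
  have "b * b' = b' * b"
    using CC_commute[OF b(2) b'A] b'(2) by (metis mult.assoc)
  then have "(b + b') * (b - b') = 0"
    using b(3) b'(2) by (simp add: algebra_simps)
  then have e_diff: "?e * (b - b') = 0"
    using carrier_of_ann[OF sA] diff_in_A[OF bA b'A] by blast
  have fA: "?f \<in> A" and fP: "?f \<in> Apos"
    using carrier_of[OF sA] perp_in_A idempotent_pos perp_idem by blast+
  have "?f * (b + b') = 0"
    using mult_carrier_of(2)[OF sA] by (simp add: perp_def algebra_simps)
  moreover have "?f * b * ?f + ?f * b' * ?f = ?f * (b + b') * ?f"
    by (simp add: algebra_simps)
  ultimately have "?f * b * ?f + ?f * b' * ?f = 0"
    by simp
  then have "?f * b * ?f = 0" "?f * b' * ?f = 0"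
    using pos_add_eq_0 sandwich_pos[OF fP b(1)] sandwich_pos[OF fP b'(1)] add.commute by metis+
  then have "?f * (b - b') = 0"
    using sandwich_eq_0[OF fA b(1)] sandwich_eq_0[OF fA b'(1)] by (simp add: algebra_simps)
  with e_diff show ?thesis
    by (simp add: perp_def algebra_simps)
qed

lemma sa_sqrt:
  assumes a: "a \<in> Apos"
  shows sa_sqrt_pos: "sa_sqrt Apos a \<in> Apos"
    and sa_sqrt_square: "sa_sqrt Apos a * sa_sqrt Apos a = a"
    and sa_sqrt_CC: "sa_sqrt Apos a \<in> sa_CC A a"
proof -
  obtain b where b: "b \<in> Apos" "b \<in> sa_CC A a" "b * b = a"
    using sqrt_exists[OF a] by blast
  have "sa_sqrt Apos a = b"
    unfolding sa_sqrt_def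
  proof (rule the_equality)
    show "b \<in> Apos \<and> b * b = a" using b by blast
  next
    fix b' assume "b' \<in> Apos \<and> b' * b' = a"
    then show "b' = b" using pos_sqrt_unique[OF a b] by blast
  qed
  with b show "sa_sqrt Apos a \<in> Apos" "sa_sqrt Apos a * sa_sqrt Apos a = a"
    "sa_sqrt Apos a \<in> sa_CC A a" by simp_all
qed

lemma sa_sqrt_of_square: "b \<in> Apos \<Longrightarrow> sa_sqrt Apos (b * b) = b"
  using pos_sqrt_unique sa_sqrt square_pos pos_in_A by metis

lemma commuting_pos_mult_pos:
  assumes x: "x \<in> Apos" and y: "y \<in> Apos" and xy: "x * y = y * x"
  shows "x * y \<in> Apos"
proof -
  let ?h = "sa_sqrt Apos x"
  have "?h * y = y * ?h"
    using CC_commute[OF sa_sqrt_CC[OF x] pos_in_A[OF y] xy] .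
  then have "?h * y * ?h = x * y"
    using sa_sqrt_square[OF x] xy by (metis mult.assoc)
  then show ?thesis
    using sandwich_pos[OF sa_sqrt_pos[OF x] y] by simp
qed

text \<open>For r = |a|, the carriers of r + a and r - a are the positive and negative spectral
  projections of a; faithfulness of r makes them complementary.\<close>
lemma carriers_of_abs_add_diff:
  assumes a: "a \<in> A" and r: "r \<in> A" "faithful r" and rr: "r * r = a * a" and ra: "r * a = a * r"
  defines "e \<equiv> carrier_of A (r + a)" and "f \<equiv> carrier_of A (r - a)"
  shows "e * f = 0" and "f * e = 0" and "e + f = 1"
    and "e * (r - a) = 0" and "f * (r + a) = 0" and "(r + a) * f = 0" and "(r - a) * e = 0"
proof -
  have rpa: "r + a \<in> A" and rma: "r - a \<in> A" using add_in_A diff_in_A a r by auto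
  have eA: "e \<in> A" and fA: "f \<in> A" unfolding e_def f_def using carrier_of_in_A rpa rma by auto
  have "(r + a) * (r - a) = 0" "(r - a) * (r + a) = 0"
    using rr ra by (simp_all add: algebra_simps)
  then show "e * (r - a) = 0" "f * (r + a) = 0"
    unfolding e_def f_def using carrier_of_ann rpa rma by blast+
  then show rpa_f: "(r + a) * f = 0" and rma_e: "(r - a) * e = 0"
    using mult_eq_0_commute eA fA rpa rma by blast+
  then show "e * f = 0" and "f * e = 0"
    using carrier_of_ann rpa rma eA fA unfolding e_def f_def by blast+
  let ?g = "1 - e - f"
  have gA: "?g \<in> A" using diff_in_A one_in_A eA fA by blast
  have "(r + a) * ?g = 0" "(r - a) * ?g = 0"
    using rpa_f rma_e mult_carrier_of(1)[OF rpa] mult_carrier_of(1)[OF rma]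
    unfolding e_def f_def by (simp_all add: algebra_simps)
  moreover have "r * ?g + r * ?g = (r + a) * ?g + (r - a) * ?g"
    by (simp add: algebra_simps)
  ultimately have "r * ?g + r * ?g = 0"
    by simp
  then have "r * ?g = 0" using double_cancel[of "r * ?g" 0] by simp
  then have "?g = 0" using faithfulD[OF r(2) gA] by blast
  then show "e + f = 1" by (simp add: algebra_simps)
qed

lemma carrier_add_diff_CC:
  assumes a: "a \<in> A" and r: "r \<in> A" "r \<in> sa_CC A (a * a)"
  shows "carrier_of A (r + a) - carrier_of A (r - a) \<in> sa_CC A a"
  unfolding sa_CC_def sa_C_def commutes_def
proof (intro CollectI conjI ballI)
  have rpa: "r + a \<in> A" and rma: "r - a \<in> A"
    using add_in_A diff_in_A a r by auto
  then show "carrier_of A (r + a) - carrier_of A (r - a) \<in> A"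
    using diff_in_A carrier_of_in_A by blast
  fix d assume "d \<in> {b \<in> A. a * b = b * a}"
  then have d: "d \<in> A" "a * d = d * a" by auto
  then have "r * d = d * r"
    using CC_commute[OF r(2) d(1)] by (metis mult.assoc)
  then have "d * (r + a) = (r + a) * d" "d * (r - a) = (r - a) * d"
    using d(2) by (simp_all add: algebra_simps)
  then have "d * carrier_of A (r + a) = carrier_of A (r + a) * d"
    "d * carrier_of A (r - a) = carrier_of A (r - a) * d"
    using carrier_of_commute rpa rma d(1) by blast+
  then show "(carrier_of A (r + a) - carrier_of A (r - a)) * d
      = d * (carrier_of A (r + a) - carrier_of A (r - a))"
    by (simp add: algebra_simps)
qed

lemma polar_decomposition:
  assumes a: "a \<in> A" and fa: "faithful a"
  obtains t where "t \<in> A" "t * t = 1" "t \<in> sa_CC A a"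
    "sa_sqrt Apos (a * a) * t = a" "t * sa_sqrt Apos (a * a) = a"
proof -
  define r where "r = sa_sqrt Apos (a * a)"
  have rA: "r \<in> A" and rr: "r * r = a * a" and rCC: "r \<in> sa_CC A (a * a)"
    unfolding r_def using sa_sqrt[OF square_pos[OF a]] pos_in_A by auto
  have fr: "faithful r"
    using faithful_of_square faithful_square[OF a fa] rr by metis
  have ra: "r * a = a * r"
    using CC_commute[OF rCC a] by (simp add: mult.assoc)
  have rpa: "r + a \<in> A" and rma: "r - a \<in> A"
    using add_in_A diff_in_A a rA by auto
  define e f where "e = carrier_of A (r + a)" and "f = carrier_of A (r - a)"
  have e: "e \<in> A" "e * e = e" and f: "f \<in> A" "f * f = f"
    unfolding e_def f_def using carrier_of rpa rma by blast+
  note ef = carriers_of_abs_add_diff[OF a rA fr rr ra, folded e_def f_def]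
  have e_rpa: "(r + a) * e = r + a" "e * (r + a) = r + a"
    and f_rma: "(r - a) * f = r - a" "f * (r - a) = r - a"
    unfolding e_def f_def using mult_carrier_of rpa rma by blast+
  define t where "t = e - f"
  have "t \<in> A" unfolding t_def using diff_in_A e f by blast
  moreover have "t * t = e * e - e * f - f * e + f * f"
    unfolding t_def by (simp add: algebra_simps)
  then have "t * t = 1"
    using e f ef(1-3) by simp
  moreover have "r * t = a"
  proof -
    have "r * t + r * t = (r + a) * t + (r - a) * t" by (simp add: algebra_simps)
    also have "\<dots> = a + a"
      unfolding t_def using e_rpa f_rma ef(6,7) by (simp add: right_diff_distrib)
    finally show ?thesis by (rule double_cancel)
  qed
  moreover have "t * r = a"
  proof -
    have "t * r + t * r = t * (r + a) + t * (r - a)" by (simp add: algebra_simps)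
    also have "\<dots> = a + a"
      unfolding t_def using e_rpa f_rma ef(4,5) by (simp add: left_diff_distrib)
    finally show ?thesis by (rule double_cancel)
  qed
  moreover have "t \<in> sa_CC A a"
    unfolding t_def e_def f_def using carrier_add_diff_CC[OF a rA rCC] .
  ultimately show ?thesis
    using that[of t] unfolding r_def by blast
qed

lemma polar_symmetry:
  assumes a: "a \<in> A" and fa: "faithful a"
  shows polar_symmetry_in_A: "polar_symmetry A Apos a \<in> A"
    and polar_symmetry_square: "polar_symmetry A Apos a * polar_symmetry A Apos a = 1"
    and polar_symmetry_CC: "polar_symmetry A Apos a \<in> sa_CC A a"
    and abs_mult_polar_symmetry: "sa_sqrt Apos (a * a) * polar_symmetry A Apos a = a"
    and polar_symmetry_mult_abs: "polar_symmetry A Apos a * sa_sqrt Apos (a * a) = a"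
proof -
  let ?r = "sa_sqrt Apos (a * a)"
  obtain t where t: "t \<in> A" "t * t = 1" "t \<in> sa_CC A a" "?r * t = a" "t * ?r = a"
    using polar_decomposition[OF a fa] .
  have car: "carrier_of A a = 1" using carrier_of_eq_1_iff a fa by blast
  have fr: "faithful ?r"
    using faithful_of_square faithful_square[OF a fa] sa_sqrt_square[OF square_pos[OF a]] by metis
  have "signum A Apos a = t"
    unfolding signum_def
  proof (rule the_equality)
    show "t \<in> A \<and> t * t = carrier_of A a \<and> t \<in> sa_CC A a \<and>
        a = sa_abs Apos a * t \<and> a = t * sa_abs Apos a"
      using t car unfolding sa_abs_def by simp
  next
    fix t' assume "t' \<in> A \<and> t' * t' = carrier_of A a \<and> t' \<in> sa_CC A a \<and>
        a = sa_abs Apos a * t' \<and> a = t' * sa_abs Apos a"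
    then have "t' \<in> A" "?r * t' = ?r * t"
      using t(4) unfolding sa_abs_def by simp_all
    then show "t' = t"
      using faithfulD[OF fr diff_in_A[OF _ t(1)]] by (simp add: right_diff_distrib)
  qed
  then have "polar_symmetry A Apos a = t"
    unfolding polar_symmetry_def car perp_def by simp
  with t show "polar_symmetry A Apos a \<in> A" "polar_symmetry A Apos a * polar_symmetry A Apos a = 1"
    "polar_symmetry A Apos a \<in> sa_CC A a" "?r * polar_symmetry A Apos a = a"
    "polar_symmetry A Apos a * ?r = a" by simp_all
qed

section \<open>Projections in generic position\<close>

lemma proj_le_of_mult:
  assumes r: "r \<in> A" "r * r = r" and m: "m \<in> A" "m * m = m" and mr: "m * r = r"
  shows "sa_le Apos r m"
proof -
  have "perp m * r = 0" using mr by (simp add: perp_def algebra_simps)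
  then have "r * perp m = 0" using mult_eq_0_commute perp_in_A m(1) r(1) by blast
  then have rm: "r * m = r" by (simp add: perp_def algebra_simps)
  have "(m - r) * (m - r) = m - r" using r(2) m(2) mr rm by (simp add: algebra_simps)
  then show ?thesis
    unfolding sa_le_def using square_pos[OF diff_in_A[OF m(1) r(1)]] by simp
qed

lemma perp_mult_eq_0_of_proj_le:
  assumes r: "r \<in> A" "r * r = r" and m: "m \<in> A" "m * m = m" and le: "sa_le Apos r m"
  shows "perp m * r = 0"
proof -
  have pm: "perp m \<in> A" "perp m \<in> Apos"
    using perp_in_A idempotent_pos perp_idem m by blast+
  have rP: "r \<in> Apos" using idempotent_pos r by blast
  have "perp m * (m - r) * perp m = - (perp m * r * perp m)"
    using m(2) mult_eq_assoc[OF m(2)] by (simp add: perp_def algebra_simps)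
  then have "- (perp m * r * perp m) \<in> Apos"
    using sandwich_pos[OF pm(2)] le unfolding sa_le_def by metis
  then have "perp m * r * perp m = 0"
    using pos_antisym sandwich_pos[OF pm(2) rP] by blast
  then show ?thesis using sandwich_eq_0[OF pm(1) rP] by blast
qed

lemma proj_le_of_sandwich_perp:
  assumes m: "m \<in> A" "m * m = m" and g: "g \<in> A" "g * g = g" and mgm: "m * perp g * m = 0"
  shows "sa_le Apos m g"
proof -
  have "perp g * m = 0"
    using sandwich_eq_0[OF m(1) idempotent_pos[OF perp_in_A perp_idem]] g mgm by blast
  then have "g * m = m" by (simp add: perp_def algebra_simps)
  then show ?thesis using proj_le_of_mult m g by blast
qed

lemma proj_meet_eqI: "is_proj_meet A Apos p q m \<Longrightarrow> proj_meet A Apos p q = m"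
  unfolding proj_meet_def
proof (rule the_equality)
  fix m' assume "is_proj_meet A Apos p q m" "is_proj_meet A Apos p q m'"
  then have "m - m' \<in> Apos" "- (m - m') \<in> Apos"
    unfolding is_proj_meet_def sa_le_def by auto
  then show "m' = m" using pos_antisym by fastforce
qed

lemma is_proj_meet_perp_carrier:
  assumes p: "p \<in> A" "p * p = p" and q: "q \<in> A" "q * q = q"
  shows "is_proj_meet A Apos p q (perp (carrier_of A (perp p + perp q)))"
proof -
  let ?x = "perp p + perp q"
  let ?e = "carrier_of A ?x"
  let ?m = "perp ?e"
  have xA: "?x \<in> A" using add_in_A perp_in_A p q by blast
  have e: "?e \<in> A" "?e * ?e = ?e" using carrier_of[OF xA] by blast+
  have m: "?m \<in> A" "?m * ?m = ?m" using perp_in_A perp_idem e by blast+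
  have mP: "?m \<in> Apos" using idempotent_pos m by blast
  have "?x * ?m = 0"
    using mult_carrier_of(1)[OF xA] by (simp add: perp_def algebra_simps)
  then have "?m * ?x = 0" using mult_eq_0_commute xA m(1) by blast
  moreover have "?m * perp p * ?m + ?m * perp q * ?m = ?m * ?x * ?m"
    by (simp add: algebra_simps)
  ultimately have "?m * perp p * ?m + ?m * perp q * ?m = 0"
    by simp
  have "sa_le Apos ?m p" "sa_le Apos ?m q"
    using proj_le_of_sandwich_perp m p q pos_add_eq_0 sandwich_pos mP idempotent_pos perp_in_A
      perp_idem \<open>?m * perp p * ?m + ?m * perp q * ?m = 0\<close> add.commute by metis+
  moreover have "sa_le Apos r ?m" if r: "r \<in> sa_P A" "sa_le Apos r p" "sa_le Apos r q" for r
  proof -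
    have rA: "r \<in> A" "r * r = r" using r(1) unfolding sa_P_def by blast+
    have "perp p * r = 0" "perp q * r = 0"
      using perp_mult_eq_0_of_proj_le rA p q r(2,3) by blast+
    then have "?x * r = 0" by (simp add: algebra_simps)
    then have "?e * r = 0" using carrier_of_ann[OF xA] rA(1) by blast
    then have "?m * r = r" by (simp add: perp_def algebra_simps)
    then show ?thesis using proj_le_of_mult rA m by blast
  qed
  ultimately show ?thesis
    unfolding is_proj_meet_def sa_P_def using m by blast
qed

lemma faithful_of_proj_meet_eq_0:
  assumes p: "p \<in> A" "p * p = p" and q: "q \<in> A" "q * q = q" and meet: "proj_meet A Apos p q = 0"
  shows "faithful (perp p + perp q)"
proof -
  have "perp (carrier_of A (perp p + perp q)) = 0"
    using proj_meet_eqI[OF is_proj_meet_perp_carrier[OF p q]] meet by simp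
  then show ?thesis
    using carrier_of_eq_1_iff add_in_A perp_in_A p q by (simp add: perp_def)
qed

lemma proj_sandwich_eq_0:
  assumes e: "e \<in> A" "e * e = e" and f: "f \<in> A" "f * f = f"
    and meet: "proj_meet A Apos e (perp f) = 0"
    and b: "b \<in> A" and efeb: "e * f * e * b = 0"
  shows "e * b = 0"
proof -
  have g: "faithful (perp e + f)"
    using faithful_of_proj_meet_eq_0[OF e perp_in_A[OF f(1)] perp_idem[OF f(2)] meet] by simp
  define w where "w = e * (b * b) * e"
  have wA: "w \<in> A" unfolding w_def using sandwich_in_A[OF e(1) square_in_A[OF b]] .
  have we: "w * e = w" and ew: "e * w = w"
    unfolding w_def using e(2) by (simp_all add: mult.assoc mult_eq_assoc[OF e(2)])
  have "e * f * e * w = e * f * e * b * b * e"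
    unfolding w_def by (simp add: mult.assoc mult_eq_assoc[OF e(2)])
  then have "w * f * w = 0"
    using efeb we ew by (metis mult.assoc mult_zero_left mult_zero_right)
  then have "f * w = 0"
    using sandwich_eq_0[OF wA idempotent_pos[OF f]] mult_eq_0_commute[OF wA f(1)] by blast
  then have "(perp e + f) * w = 0"
    using ew by (simp add: perp_def algebra_simps)
  then have "e * (b * b) * e = 0"
    using faithfulD[OF g wA] w_def by simp
  then have "e * (b * b) = 0"
    using sandwich_eq_0[OF e(1) square_pos[OF b]] by blast
  then show ?thesis
    using pos_mult_square_eq_0[OF idempotent_pos[OF e] b] by blast
qed

lemma faithful_sum_compressions:
  assumes e: "e \<in> A" "e * e = e" and f: "f \<in> A" "f * f = f" and g: "g \<in> A" "g * g = g"
    and meet_f: "proj_meet A Apos e (perp f) = 0"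
    and meet_g: "proj_meet A Apos (perp e) (perp g) = 0"
  shows "faithful (e * f * e + perp e * g * perp e)"
  unfolding faithful_def
proof (intro ballI impI)
  fix b assume b: "b \<in> A" and h: "(e * f * e + perp e * g * perp e) * b = 0"
  have ee: "e * (e * x) = e * x" and ep: "e * (perp e * x) = 0" and pe: "perp e * (e * x) = 0"
    and pp: "perp e * (perp e * x) = perp e * x" for x
    using e(2) by (simp_all add: perp_def algebra_simps mult_eq_assoc[OF e(2)])
  have "e * f * e * b = e * ((e * f * e + perp e * g * perp e) * b)"
    by (simp add: algebra_simps ee ep)
  then have "e * b = 0"
    using proj_sandwich_eq_0[OF e f meet_f b] h by simp
  moreover have "perp e * g * perp e * b = perp e * ((e * f * e + perp e * g * perp e) * b)"
    by (simp add: algebra_simps pe pp)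
  then have "perp e * b = 0"
    using proj_sandwich_eq_0[OF perp_in_A[OF e(1)] perp_idem[OF e(2)] g meet_g b] h by simp
  ultimately show "b = 0"
    by (simp add: perp_def algebra_simps)
qed

lemma generic_position_faithful:
  assumes p: "p \<in> sa_P A" and q: "q \<in> sa_P A" and gen: "generic_position A Apos p q"
  shows "faithful (p - perp q)" and "faithful (p - q)"
proof -
  have p': "p \<in> A" "p * p = p" and q': "q \<in> A" "q * q = q"
    using p q unfolding sa_P_def by blast+
  have pq: "perp q \<in> A" "perp q * perp q = perp q"
    using perp_in_A perp_idem q' by blast+
  have meets: "proj_meet A Apos p q = 0" "proj_meet A Apos p (perp q) = 0"
    "proj_meet A Apos (perp p) q = 0" "proj_meet A Apos (perp p) (perp q) = 0"
    using gen unfolding generic_position_def by blast+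
  have "faithful ((p - perp q) * (p - perp q))"
    using faithful_sum_compressions[OF p' q' pq] meets
    by (simp add: square_diff_perp[OF p'(2) q'(2)])
  then show "faithful (p - perp q)" by (rule faithful_of_square)
  have "faithful ((p - q) * (p - q))"
    using faithful_sum_compressions[OF p' pq q'] meets
    by (simp add: square_diff[OF p'(2) q'(2)])
  then show "faithful (p - q)" by (rule faithful_of_square)
qed

end

section \<open>Anticommuting pairs\<close>

locale anticommuting_pair = synaptic +
  fixes X Y c s u v :: 'a
  assumes X_in_A: "X \<in> A" and Y_in_A: "Y \<in> A"
    and anticommute: "X * Y + Y * X = 0" and sum_squares: "X * X + Y * Y = 1"
    and faithful_X: "faithful X" and faithful_Y: "faithful Y"
    and c_eq: "c = sa_sqrt Apos (X * X)" and s_eq: "s = sa_sqrt Apos (Y * Y)"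
    and u_eq: "u = polar_symmetry A Apos X" and v_eq: "v = polar_symmetry A Apos Y"
begin

lemma abs_X: "c \<in> Apos" "c * c = X * X" "c \<in> sa_CC A (X * X)"
  unfolding c_eq using sa_sqrt square_pos X_in_A by blast+

lemma abs_Y: "s \<in> Apos" "s * s = Y * Y" "s \<in> sa_CC A (Y * Y)"
  unfolding s_eq using sa_sqrt square_pos Y_in_A by blast+

lemma polar_X: "u \<in> A" "u * u = 1" "u \<in> sa_CC A X" "c * u = X" "u * c = X"
  unfolding u_eq c_eq using polar_symmetry X_in_A faithful_X by blast+

lemma polar_Y: "v \<in> A" "v * v = 1" "v \<in> sa_CC A Y" "s * v = Y" "v * s = Y"
  unfolding v_eq s_eq using polar_symmetry Y_in_A faithful_Y by blast+

lemma c_in_A: "c \<in> A" and s_in_A: "s \<in> A"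
  using abs_X(1) abs_Y(1) pos_in_A by blast+

lemma faithful_c: "faithful c" and faithful_s: "faithful s"
  using faithful_of_square faithful_square X_in_A Y_in_A faithful_X faithful_Y abs_X(2) abs_Y(2)
  by metis+

lemma Y_mult_X: "Y * X = - (X * Y)"
  using anticommute by (simp add: eq_neg_iff_add_eq_0 add.commute)

lemma squares_commute: "X * X * Y = Y * (X * X)" "Y * Y * X = X * (Y * Y)"
  by (simp_all add: mult.assoc Y_mult_X mult_eq_assoc[OF Y_mult_X])

lemma abs_commute: "c * Y = Y * c" "s * X = X * s" "s * c = c * s"
  and polar_commute_abs: "u * s = s * u" "v * c = c * v"
proof -
  show "c * Y = Y * c" "s * X = X * s"
    using CC_commute[OF abs_X(3) Y_in_A] CC_commute[OF abs_Y(3) X_in_A] squares_commute by simp_all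
  have YY: "Y * Y = 1 - X * X" and XX: "X * X = 1 - Y * Y"
    using sum_squares by (simp_all add: algebra_simps)
  have "u * (X * X) = X * X * u"
    using CC_commute[OF polar_X(3) square_in_A[OF X_in_A]] by (simp add: mult.assoc)
  then have "Y * Y * u = u * (Y * Y)"
    unfolding YY by (simp add: algebra_simps)
  moreover have "v * (Y * Y) = Y * Y * v"
    using CC_commute[OF polar_Y(3) square_in_A[OF Y_in_A]] by (simp add: mult.assoc)
  then have "X * X * v = v * (X * X)"
    unfolding XX by (simp add: algebra_simps)
  moreover have "s * (Y * Y) = Y * Y * s"
    using CC_commute[OF abs_Y(3) square_in_A[OF Y_in_A]] by simp
  then have "X * X * s = s * (X * X)"
    unfolding XX by (simp add: algebra_simps)
  ultimately show "s * c = c * s" "u * s = s * u" "v * c = c * v"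
    using CC_commute[OF abs_X(3) s_in_A] CC_commute[OF abs_Y(3) polar_X(1)]
      CC_commute[OF abs_X(3) polar_Y(1)] by simp_all
qed

lemma polar_symmetries_anticommute: "u * v + v * u = 0"
proof -
  have "c * (u * Y + Y * u) = c * u * Y + c * Y * u"
    by (simp add: algebra_simps)
  also have "\<dots> = X * Y + Y * X"
    using polar_X(4) abs_commute(1) by (simp add: mult.assoc)
  finally have uY: "u * Y + Y * u = 0"
    using anticommute faithfulD[OF faithful_c jordan_in_A[OF polar_X(1) Y_in_A]] by simp
  have "s * (u * v + v * u) = s * u * v + s * v * u"
    by (simp add: algebra_simps)
  also have "\<dots> = u * Y + Y * u"
    using polar_Y(4) polar_commute_abs(1) by (metis mult.assoc)
  finally show ?thesis
    using uY faithfulD[OF faithful_s jordan_in_A[OF polar_X(1) polar_Y(1)]] by simp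
qed

lemma commute_rules:
  "s * c = c * s" "u * c = c * u" "v * c = c * v" "u * s = s * u" "v * s = s * v"
  "v * u = - (u * v)" "u * u = 1" "v * v = 1"
  using abs_commute polar_commute_abs polar_X polar_Y polar_symmetries_anticommute
  by (simp_all add: eq_neg_iff_add_eq_0 add.commute)

text \<open>Oriented, these rules bring every monomial in c, s, u, v into the order c, s, u, v.\<close>
lemmas normalize = commute_rules commute_rules[THEN mult_eq_assoc]

lemma abs_mult_pos: "c * s \<in> Apos"
  using commuting_pos_mult_pos abs_X(1) abs_Y(1) commute_rules(1) by simp

lemma faithful_abs_mult: "faithful (c * s)"
  using faithful_mult_pos c_in_A faithful_c abs_Y(1) faithful_s by blast

lemma carriers_eq_1: "carrier_of A c = 1" "carrier_of A s = 1" "carrier_of A (c * s) = 1"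
  using carrier_of_eq_1_iff[OF c_in_A] carrier_of_eq_1_iff[OF s_in_A]
    carrier_of_eq_1_iff[OF pos_in_A[OF abs_mult_pos]] faithful_c faithful_s faithful_abs_mult
  by simp_all

lemma sum_symmetry_square: "(s * u - c * v) * (s * u - c * v) = 1"
proof -
  have "(s * u - c * v) * (s * u - c * v) = s * s + c * c"
    by (simp add: algebra_simps normalize)
  then show ?thesis
    using abs_X(2) abs_Y(2) sum_squares by (simp add: add.commute)
qed

lemma XY_mult_sum: "X * Y * (X + Y) = c * s * (s * u - c * v)"
proof -
  have "X * Y * (X + Y) = Y * Y * X - X * X * Y"
    by (simp add: algebra_simps Y_mult_X mult_eq_assoc[OF Y_mult_X])
  also have "\<dots> = s * s * (c * u) - c * c * (s * v)"
    by (simp only: abs_X(2) abs_Y(2) polar_X(4) polar_Y(4))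
  also have "\<dots> = c * s * (s * u - c * v)"
    by (simp add: algebra_simps normalize)
  finally show ?thesis .
qed

lemma XY_mult_sum_in_A: "X * Y * (X + Y) \<in> A"
proof -
  have YY: "Y * Y = 1 - X * X" and XX: "X * X = 1 - Y * Y"
    using sum_squares by (simp_all add: algebra_simps)
  have "Y * Y * X = X - X * X * X"
    unfolding YY by (simp add: algebra_simps)
  moreover have "X * Y * (X + Y) = Y * Y * X - X * X * Y"
    by (simp add: algebra_simps Y_mult_X mult_eq_assoc[OF Y_mult_X])
  moreover have "X * X * Y = Y - Y * Y * Y"
    unfolding XX by (simp add: algebra_simps)
  ultimately have "X * Y * (X + Y) = (X - X * X * X) - (Y - Y * Y * Y)"
    by simp
  then show ?thesis
    using diff_in_A sandwich_in_A X_in_A Y_in_A by simp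
qed

lemma XY_mult_sum_square: "(X * Y * (X + Y)) * (X * Y * (X + Y)) = (c * s) * (c * s)"
proof -
  let ?z = "c * s" and ?w = "s * u - c * v"
  have comm: "?w * ?z = ?z * ?w"
    by (simp add: algebra_simps normalize)
  have "(?z * ?w) * (?z * ?w) = ?z * ((?w * ?z) * ?w)"
    by (simp only: mult.assoc)
  also have "\<dots> = ?z * ?z * (?w * ?w)"
    by (simp only: comm mult.assoc)
  finally show ?thesis
    unfolding XY_mult_sum sum_symmetry_square by simp
qed

lemma faithful_XY_mult_sum: "faithful (X * Y * (X + Y))"
proof -
  have "faithful ((c * s) * (c * s))"
    using faithful_square[OF pos_in_A[OF abs_mult_pos] faithful_abs_mult] .
  then have "faithful ((X * Y * (X + Y)) * (X * Y * (X + Y)))"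
    by (simp only: XY_mult_sum_square)
  then show ?thesis by (rule faithful_of_square)
qed

lemma polar_symmetry_XY_mult_sum: "polar_symmetry A Apos (X * Y * (X + Y)) = s * u - c * v"
proof -
  let ?K = "X * Y * (X + Y)" and ?k = "polar_symmetry A Apos (X * Y * (X + Y))"
  have wA: "s * u - c * v \<in> A"
    using diff_in_A commuting_mult_in_A s_in_A c_in_A polar_X(1) polar_Y(1) commute_rules by simp
  have "c * s * ?k = ?K"
    using abs_mult_polar_symmetry[OF XY_mult_sum_in_A faithful_XY_mult_sum]
    unfolding XY_mult_sum_square sa_sqrt_of_square[OF abs_mult_pos] .
  then have "c * s * (?k - (s * u - c * v)) = 0"
    unfolding XY_mult_sum by (simp add: right_diff_distrib)
  then show ?thesis
    using faithfulD[OF faithful_abs_mult diff_in_A[OF polar_symmetry_in_A wA]]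
      XY_mult_sum_in_A faithful_XY_mult_sum by simp
qed

lemma carrier_of_abs_mult_sum_symmetry: "carrier_of A (c * s * (s * u - c * v)) = 1"
  using carrier_of_eq_1_iff XY_mult_sum_in_A faithful_XY_mult_sum unfolding XY_mult_sum by blast

lemma polar_symmetries_mult_half_sum:
  assumes h: "h + h = 1 + X + Y"
  shows "u * v * h + h * v * u = s * u - c * v"
proof -
  have "(u * v * h + h * v * u) + (u * v * h + h * v * u) = u * v * (h + h) + (h + h) * v * u"
    by (simp add: algebra_simps)
  also have "\<dots> = u * v * (1 + c * u + s * v) + (1 + c * u + s * v) * v * u"
    using h polar_X(4) polar_Y(4) by simp
  also have "\<dots> = (s * u - c * v) + (s * u - c * v)"
    by (simp add: algebra_simps normalize)
  finally show ?thesis by (rule double_cancel)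
qed

end

theorem lemma7p7:
  fixes A Apos :: "'a::real_algebra_1 set" and p q :: 'a
  assumes SA: "synaptic_algebra A Apos"
    and pP: "p \<in> sa_P A" and qP: "q \<in> sa_P A"
    and gen: "generic_position A Apos p q"
  defines "c \<equiv> sa_sqrt Apos (p * q * p + perp p * perp q * perp p)"
    and "s \<equiv> sa_sqrt Apos (p * perp q * p + perp p * q * perp p)"
    and "u \<equiv> polar_symmetry A Apos (p - perp q)"
    and "v \<equiv> polar_symmetry A Apos (p - q)"
    and "k \<equiv> polar_symmetry A Apos (p * q * perp p + perp p * q * p)"
    and "j \<equiv> polar_symmetry A Apos (p - perp q) * polar_symmetry A Apos (p - q) * p
             + p * polar_symmetry A Apos (p - q) * polar_symmetry A Apos (p - perp q)"
  shows "(carrier_of A c = 1 \<and> carrier_of A s = 1 \<and> carrier_of A (c * s) = 1 \<and>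
         carrier_of A (c * s * j) = 1) \<and>
         u * v + v * u = 0 \<and>
         j = k"
proof -
  interpret synaptic A Apos by (rule synaptic.intro[OF SA])
  have p: "p \<in> A" "p * p = p" and q: "q \<in> A" "q * q = q"
    using pP qP unfolding sa_P_def by blast+
  interpret anticommuting_pair A Apos "p - perp q" "p - q" c s u v
    using diff_in_A perp_in_A p q generic_position_faithful[OF pP qP gen]
      projection_pair_identities[OF p(2) q(2)]
    by unfold_locales (simp_all add: c_def s_def u_def v_def)
  have "j = u * v * p + p * v * u"
    unfolding j_def u_def v_def ..
  then have "j = s * u - c * v"
    using polar_symmetries_mult_half_sum double_eq_sum_diffs[OF p(2) q(2)] by simp
  moreover have "k = s * u - c * v"
    using polar_symmetry_XY_mult_sum diffs_mult_sum[OF p(2) q(2)] by (simp add: k_def)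
  ultimately show ?thesis
    using carriers_eq_1 carrier_of_abs_mult_sum_symmetry polar_symmetries_anticommute by simp
qed

end
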